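(* For every integer $n\geq 2$ there exists a balanced bipartite graph $\mathcal{B}$ on $2n$ vertices with $\delta(\mathcal{B})=\lceil \frac{n}{2}\rceil$ and $f(\mathcal{B})=n+2$.
   Context: All graphs are finite and simple. A balanced bipartite graph on $2n$ vertices is a bipartite graph with a given bipartition $(V_1,V_2)$ where $|V_1|=|V_2|=n$. $\delta(G)$ denotes the minimum degree of $G$. The forest number $f(G)$ is the maximum cardinality of a subset $S\subseteq V(G)$ such that the induced subgraph $G[S]$ is a forest. *)

theory Defs
  imports Complex_Main
begin

definition simple_graph :: "'a set \<Rightarrow> ('a \<Rightarrow> 'a \<Rightarrow> bool) \<Rightarrow> bool" where
  "simple_graph V E \<longleftrightarrow> finite V \<and> (\<forall>u v. E u v \<longrightarrow> u \<in> V \<and> v \<in> V)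
     \<and> (\<forall>u v. E u v \<longrightarrow> E v u) \<and> (\<forall>v. \<not> E v v)"

definition balanced_bipartite :: "nat \<Rightarrow> 'a set \<Rightarrow> 'a set \<Rightarrow> ('a \<Rightarrow> 'a \<Rightarrow> bool) \<Rightarrow> bool" where
  "balanced_bipartite n V1 V2 E \<longleftrightarrow> simple_graph (V1 \<union> V2) E \<and> V1 \<inter> V2 = {}
     \<and> card V1 = n \<and> card V2 = n
     \<and> (\<forall>u v. E u v \<longrightarrow> (u \<in> V1 \<and> v \<in> V2) \<or> (u \<in> V2 \<and> v \<in> V1))"

definition degree :: "'a set \<Rightarrow> ('a \<Rightarrow> 'a \<Rightarrow> bool) \<Rightarrow> 'a \<Rightarrow> nat" where
  "degree V E v = card {u \<in> V. E v u}"

definition min_degree :: "'a set \<Rightarrow> ('a \<Rightarrow> 'a \<Rightarrow> bool) \<Rightarrow> nat" where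
  "min_degree V E = Min (degree V E ` V)"

definition is_cycle :: "'a set \<Rightarrow> ('a \<Rightarrow> 'a \<Rightarrow> bool) \<Rightarrow> 'a list \<Rightarrow> bool" where
  "is_cycle S E cs \<longleftrightarrow> length cs \<ge> 3 \<and> distinct cs \<and> set cs \<subseteq> S
     \<and> (\<forall>i. Suc i < length cs \<longrightarrow> E (cs ! i) (cs ! Suc i))
     \<and> E (last cs) (hd cs)"

definition induces_forest :: "'a set \<Rightarrow> ('a \<Rightarrow> 'a \<Rightarrow> bool) \<Rightarrow> 'a set \<Rightarrow> bool" where
  "induces_forest V E S \<longleftrightarrow> S \<subseteq> V \<and> \<not> (\<exists>cs. is_cycle S E cs)"

definition forest_number :: "'a set \<Rightarrow> ('a \<Rightarrow> 'a \<Rightarrow> bool) \<Rightarrow> nat" where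
  "forest_number V E = Max (card ` {S. induces_forest V E S})"

end

theory Submission
  imports Defs
begin

text \<open>Take two complete bipartite blocks, \<open>K\<^sub>k\<^sub>,\<^sub>k\<close> on \<open>{..<k} \<union> {n..<n+k}\<close> and
  \<open>K\<^sub>n\<^sub>-\<^sub>k\<^sub>,\<^sub>n\<^sub>-\<^sub>k\<close> on \<open>{k..<n} \<union> {n+k..<2n}\<close>, with \<open>k = \<lceil>n/2\<rceil>\<close>; for odd \<open>n\<close> the second
  block is one vertex short on each side, so vertex \<open>0\<close> is joined to its upper side and vertex
  \<open>n\<close> to its lower side. Then every degree is at least \<open>k\<close>, with equality at vertex \<open>k - 1\<close>.
  An induced forest meets a complete bipartite block \<open>K\<^sub>t\<^sub>,\<^sub>t\<close> in at most \<open>t + 1\<close> vertices,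
  since two vertices on each side span a 4-cycle; hence it has at most \<open>(k+1) + (n-k+1)\<close>
  vertices. The lower side together with one upper vertex from each block induces a tree.\<close>

lemma is_cycle_adjacent_mod:
  assumes "is_cycle S E cs" "i < length cs"
  shows "E (cs ! i) (cs ! (Suc i mod length cs))"
proof (cases "Suc i < length cs")
  case True
  then show ?thesis using assms(1) by (simp add: is_cycle_def)
next
  case False
  then have "i = length cs - 1" "cs \<noteq> []" using assms(2) by auto
  then show ?thesis
    using assms(1) by (simp add: is_cycle_def last_conv_nth hd_conv_nth)
qed

lemma is_cycle_two_neighbours:
  assumes cycle: "is_cycle S E cs" and "symp E" and "v \<in> set cs"
  obtains u w where "u \<in> set cs" "w \<in> set cs" "u \<noteq> w" "E v u" "E v w"
proof -
  let ?L = "length cs"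
  have L: "3 \<le> ?L" and "distinct cs" using cycle by (auto simp: is_cycle_def)
  then have "0 < ?L" by linarith
  obtain i where i: "i < ?L" "v = cs ! i" using \<open>v \<in> set cs\<close> by (auto simp: in_set_conv_nth)
  define j where "j = Suc i mod ?L"
  define h where "h = (i + ?L - 1) mod ?L"
  have "j < ?L" "h < ?L" using \<open>0 < ?L\<close> by (simp_all add: j_def h_def)
  have "Suc h mod ?L = Suc (i + ?L - 1) mod ?L" by (simp add: h_def mod_Suc_eq)
  also have "Suc (i + ?L - 1) = i + ?L" using \<open>0 < ?L\<close> by simp
  finally have "Suc h mod ?L = i" using i by simp
  then have "E (cs ! h) v" using is_cycle_adjacent_mod[OF cycle \<open>h < ?L\<close>] i by simp
  with \<open>symp E\<close> have "E v (cs ! h)" by (rule sympD)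
  moreover have "E v (cs ! j)" using is_cycle_adjacent_mod[OF cycle \<open>i < ?L\<close>] i j_def by simp
  moreover have "j \<noteq> h"
  proof
    assume "j = h"
    have "Suc (Suc i) mod ?L \<noteq> i" using L \<open>i < ?L\<close> by (cases "Suc (Suc i) < ?L") (auto simp: mod_if)
    moreover have "Suc (Suc i) mod ?L = Suc j mod ?L" by (simp add: j_def mod_Suc_eq)
    ultimately show False using \<open>j = h\<close> \<open>Suc h mod ?L = i\<close> by simp
  qed
  then have "cs ! j \<noteq> cs ! h" using \<open>distinct cs\<close> \<open>j < ?L\<close> \<open>h < ?L\<close> by (simp add: nth_eq_iff_index_eq)
  ultimately show ?thesis
    using that[of "cs ! j" "cs ! h"] nth_mem[OF \<open>j < ?L\<close>] nth_mem[OF \<open>h < ?L\<close>] by blast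
qed

lemma not_in_cycle_if_one_neighbour:
  assumes "is_cycle S E cs" "symp E" "set cs \<subseteq> T"
    and "\<And>u w. u \<in> T \<Longrightarrow> w \<in> T \<Longrightarrow> E v u \<Longrightarrow> E v w \<Longrightarrow> u = w"
  shows "v \<notin> set cs"
proof
  assume "v \<in> set cs"
  then obtain u w where "u \<in> set cs" "w \<in> set cs" "u \<noteq> w" "E v u" "E v w"
    by (rule is_cycle_two_neighbours[OF assms(1,2)])
  with assms(3,4) show False by blast
qed

lemma card_set_is_cycle: "is_cycle S E cs \<Longrightarrow> 3 \<le> card (set cs)"
  by (simp add: is_cycle_def distinct_card)

lemma two_elements:
  assumes "finite A" "2 \<le> card A"
  obtains a a' where "a \<in> A" "a' \<in> A" "a \<noteq> a'"
  using assms card_le_Suc0_iff_eq[OF \<open>finite A\<close>] by (auto simp: numeral_2_eq_2 not_less_eq_eq[symmetric])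

lemma acyclic_complete_bipartite_side_le_1:
  assumes "finite S" "A \<inter> B = {}" and complete: "\<And>a c. a \<in> A \<Longrightarrow> c \<in> B \<Longrightarrow> E a c \<and> E c a"
    and acyclic: "\<not> (\<exists>cs. is_cycle S E cs)"
  shows "card (S \<inter> A) \<le> 1 \<or> card (S \<inter> B) \<le> 1"
proof (rule ccontr)
  assume "\<not> ?thesis"
  then have "2 \<le> card (S \<inter> A)" "2 \<le> card (S \<inter> B)" by auto
  moreover have "finite (S \<inter> A)" "finite (S \<inter> B)" using \<open>finite S\<close> by simp_all
  ultimately obtain a a' c c' where "a \<in> S \<inter> A" "a' \<in> S \<inter> A" "a \<noteq> a'"
    "c \<in> S \<inter> B" "c' \<in> S \<inter> B" "c \<noteq> c'"
    by (metis two_elements)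
  moreover from calculation have "a \<noteq> c" "a \<noteq> c'" "a' \<noteq> c" "a' \<noteq> c'" using \<open>A \<inter> B = {}\<close> by auto
  ultimately have "is_cycle S E [a, c, a', c']"
    unfolding is_cycle_def using complete by (auto simp: less_Suc_eq nth_Cons split: nat.split)
  with acyclic show False by blast
qed

lemma card_acyclic_complete_bipartite:
  assumes "finite S" "finite A" "finite B" "A \<inter> B = {}"
    and "\<And>a c. a \<in> A \<Longrightarrow> c \<in> B \<Longrightarrow> E a c \<and> E c a"
    and "\<not> (\<exists>cs. is_cycle S E cs)"
  shows "card (S \<inter> (A \<union> B)) \<le> max (card A) (card B) + 1"
proof -
  have "card (S \<inter> (A \<union> B)) = card (S \<inter> A) + card (S \<inter> B)"
    using assms(1,4) by (simp add: Int_Un_distrib card_Un_disjoint disjoint_iff)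
  moreover have "card (S \<inter> A) \<le> card A" "card (S \<inter> B) \<le> card B"
    using assms(2,3) by (simp_all add: card_mono)
  ultimately show ?thesis
    using acyclic_complete_bipartite_side_le_1[OF assms(1,4-6)] by linarith
qed

lemma degree_ge_card:
  assumes "finite V" "N \<subseteq> V" "\<And>u. u \<in> N \<Longrightarrow> E v u"
  shows "card N \<le> degree V E v"
  unfolding degree_def using assms by (intro card_mono) auto

lemma min_degree_eqI:
  assumes "finite V" "v \<in> V" "degree V E v = k" "\<And>w. w \<in> V \<Longrightarrow> k \<le> degree V E w"
  shows "min_degree V E = k"
  unfolding min_degree_def using assms by (intro Min_eqI) auto

lemma forest_number_eqI:
  assumes "finite V" "induces_forest V E S" "card S = m"
    and "\<And>T. induces_forest V E T \<Longrightarrow> card T \<le> m"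
  shows "forest_number V E = m"
proof -
  have "{T. induces_forest V E T} \<subseteq> Pow V" by (auto simp: induces_forest_def)
  then have "finite {T. induces_forest V E T}" using \<open>finite V\<close> by (meson finite_Pow_iff finite_subset)
  then show ?thesis unfolding forest_number_def using assms(2-4) by (intro Max_eqI) auto
qed

definition two_blocks_edge :: "nat \<Rightarrow> nat \<Rightarrow> bool \<Rightarrow> nat \<Rightarrow> nat \<Rightarrow> bool" where
  "two_blocks_edge n k b u v \<longleftrightarrow> u < n \<and> n \<le> v \<and> v < 2*n \<and>
     ((u < k \<longleftrightarrow> v < n + k) \<or> b \<and> (u = 0 \<and> n + k \<le> v \<or> k \<le> u \<and> v = n))"

definition two_blocks_graph :: "nat \<Rightarrow> nat \<Rightarrow> bool \<Rightarrow> nat \<Rightarrow> nat \<Rightarrow> bool" where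
  "two_blocks_graph n k b u v \<longleftrightarrow> two_blocks_edge n k b u v \<or> two_blocks_edge n k b v u"

lemma symp_two_blocks_graph: "symp (two_blocks_graph n k b)"
  by (auto simp: symp_def two_blocks_graph_def)

lemma two_blocks_balanced: "balanced_bipartite n {..<n} {n..<2*n} (two_blocks_graph n k b)"
  unfolding balanced_bipartite_def simple_graph_def two_blocks_graph_def two_blocks_edge_def
  by auto

lemma two_blocks_degree_ge:
  assumes "1 \<le> k" "k \<le> n" "v < 2*n"
  shows "min k (n - k + of_bool b) \<le> degree {..<2*n} (two_blocks_graph n k b) v"
proof -
  let ?E = "two_blocks_graph n k b"
  have "\<exists>N \<subseteq> {..<2*n}. (\<forall>u \<in> N. ?E v u) \<and> min k (n - k + of_bool b) \<le> card N"
  proof -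
    consider "v < k" | "k \<le> v" "v < n" | "n \<le> v" "v < n + k" | "n + k \<le> v" by linarith
    then show ?thesis
    proof cases
      case 1
      then show ?thesis using assms
        by (intro exI[of _ "{n..<n+k}"]) (auto simp: two_blocks_graph_def two_blocks_edge_def)
    next
      case 2
      then show ?thesis using assms
        by (intro exI[of _ "{n+k..<2*n} \<union> (if b then {n} else {})"])
          (auto simp: two_blocks_graph_def two_blocks_edge_def)
    next
      case 3
      then show ?thesis using assms
        by (intro exI[of _ "{..<k}"]) (auto simp: two_blocks_graph_def two_blocks_edge_def)
    next
      case 4
      then show ?thesis using assms
        by (intro exI[of _ "{k..<n} \<union> (if b then {0} else {})"])
          (auto simp: two_blocks_graph_def two_blocks_edge_def)
    qed
  qed
  then show ?thesis by (metis degree_ge_card finite_lessThan le_trans)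
qed

lemma two_blocks_min_degree:
  assumes "1 \<le> k" "2 * k \<le> n + of_bool b" "b \<Longrightarrow> 2 \<le> k"
  shows "min_degree {..<2*n} (two_blocks_graph n k b) = k"
proof (rule min_degree_eqI)
  have "k < n" using assms by (cases b) auto
  show "k - 1 \<in> {..<2*n}" using \<open>k < n\<close> by simp
  have "{u \<in> {..<2*n}. two_blocks_graph n k b (k - 1) u} = {n..<n+k}"
    using assms \<open>k < n\<close> by (auto simp: two_blocks_graph_def two_blocks_edge_def)
  then show "degree {..<2*n} (two_blocks_graph n k b) (k - 1) = k"
    by (simp add: degree_def)
  show "k \<le> degree {..<2*n} (two_blocks_graph n k b) w" if "w \<in> {..<2*n}" for w
    using two_blocks_degree_ge[of k n w b] that assms \<open>k < n\<close> by auto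
qed simp

lemma two_blocks_induced_forest_card_le:
  assumes "k \<le> n" "induces_forest {..<2*n} (two_blocks_graph n k b) T"
  shows "card T \<le> n + 2"
proof -
  let ?E = "two_blocks_graph n k b"
  have "T \<subseteq> {..<2*n}" and acyclic: "\<not> (\<exists>cs. is_cycle T ?E cs)"
    using assms(2) by (auto simp: induces_forest_def)
  then have "finite T" by (meson finite_lessThan finite_subset)
  have "{..<k} \<inter> {n..<n+k} = {}" using assms(1) by auto
  then have "card (T \<inter> ({..<k} \<union> {n..<n+k})) \<le> k + 1"
    using card_acyclic_complete_bipartite[OF \<open>finite T\<close> _ _ _ _ acyclic, of "{..<k}" "{n..<n+k}"]
      assms(1) by (auto simp: two_blocks_graph_def two_blocks_edge_def)
  moreover have "card (T \<inter> ({k..<n} \<union> {n+k..<2*n})) \<le> n - k + 1"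
    using card_acyclic_complete_bipartite[OF \<open>finite T\<close> _ _ _ _ acyclic, of "{k..<n}" "{n+k..<2*n}"]
      assms(1) by (auto simp: two_blocks_graph_def two_blocks_edge_def)
  moreover have "T = T \<inter> ({..<k} \<union> {n..<n+k}) \<union> T \<inter> ({k..<n} \<union> {n+k..<2*n})"
    using \<open>T \<subseteq> {..<2*n}\<close> by auto
  then have "card T \<le> card (T \<inter> ({..<k} \<union> {n..<n+k})) + card (T \<inter> ({k..<n} \<union> {n+k..<2*n}))"
    by (metis card_Un_le)
  ultimately show ?thesis using assms(1) by linarith
qed

lemma two_blocks_induces_forest:
  assumes "1 \<le> k" "k < n" "b \<Longrightarrow> 2 \<le> k"
  shows "induces_forest {..<2*n} (two_blocks_graph n k b) ({..<n} \<union> {n + k - 1, n + k})"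
    (is "induces_forest _ ?E ?S")
proof -
  have "\<not> is_cycle ?S ?E cs" for cs
  proof
    assume cycle: "is_cycle ?S ?E cs"
    have "set cs \<subseteq> {0, n + k - 1, n + k}"
    proof
      fix v assume v: "v \<in> set cs"
      have "set cs \<subseteq> ?S" using cycle by (simp add: is_cycle_def)
      then have "v \<in> ?S" using v by blast
      show "v \<in> {0, n + k - 1, n + k}"
      proof (rule ccontr)
        assume "v \<notin> {0, n + k - 1, n + k}"
        then have "v \<notin> set cs"
          using \<open>set cs \<subseteq> ?S\<close> \<open>v \<in> ?S\<close> assms
          by (intro not_in_cycle_if_one_neighbour[OF cycle symp_two_blocks_graph])
            (auto simp: two_blocks_graph_def two_blocks_edge_def)
        with v show False by simp
      qed
    qed
    moreover from this have "n + k - 1 \<notin> set cs"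
      using assms by (intro not_in_cycle_if_one_neighbour[OF cycle symp_two_blocks_graph])
        (auto simp: two_blocks_graph_def two_blocks_edge_def)
    ultimately have "set cs \<subseteq> {0, n + k}" by auto
    then have "card (set cs) \<le> card {0, n + k}" by (simp add: card_mono)
    also have "\<dots> \<le> 2" by (simp add: card_insert_if)
    finally show False using card_set_is_cycle[OF cycle] by simp
  qed
  moreover have "?S \<subseteq> {..<2*n}" using assms by auto
  ultimately show ?thesis by (auto simp: induces_forest_def)
qed

lemma two_blocks_forest_number:
  assumes "1 \<le> k" "k < n" "b \<Longrightarrow> 2 \<le> k"
  shows "forest_number {..<2*n} (two_blocks_graph n k b) = n + 2"
proof (rule forest_number_eqI)
  show "card ({..<n} \<union> {n + k - 1, n + k}) = n + 2"
    using assms by (auto simp: card_insert_if)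
  show "induces_forest {..<2*n} (two_blocks_graph n k b) ({..<n} \<union> {n + k - 1, n + k})"
    using assms by (rule two_blocks_induces_forest)
  show "card T \<le> n + 2" if "induces_forest {..<2*n} (two_blocks_graph n k b) T" for T
    using two_blocks_induced_forest_card_le[OF _ that] assms by simp
qed simp

theorem proposition2p2:
  fixes n :: nat
  assumes "n \<ge> 2"
  shows "\<exists>(V1 :: nat set) V2 E. balanced_bipartite n V1 V2 E
           \<and> min_degree (V1 \<union> V2) E = nat \<lceil>real n / 2\<rceil>
           \<and> forest_number (V1 \<union> V2) E = n + 2"
proof -
  define k where "k = (n + 1) div 2"
  define b where "b = odd n"
  have k: "1 \<le> k" "k < n" "b \<Longrightarrow> 2 \<le> k"
    using assms unfolding k_def b_def by presburger+
  have "2 * k \<le> n + of_bool b"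
    unfolding k_def b_def by (cases "odd n") (auto elim: oddE)
  have ceiling_half: "nat \<lceil>real n / 2\<rceil> = k" unfolding k_def by linarith
  have V: "{..<n} \<union> {n..<2*n} = {..<2*n}" by auto
  show ?thesis
  proof (intro exI conjI)
    show "balanced_bipartite n {..<n} {n..<2*n} (two_blocks_graph n k b)"
      by (rule two_blocks_balanced)
    show "min_degree ({..<n} \<union> {n..<2*n}) (two_blocks_graph n k b) = nat \<lceil>real n / 2\<rceil>"
      unfolding V ceiling_half by (rule two_blocks_min_degree) fact+
    show "forest_number ({..<n} \<union> {n..<2*n}) (two_blocks_graph n k b) = n + 2"
      unfolding V by (rule two_blocks_forest_number) fact+
  qed
qed

end
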